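(* Let $G=(V,E)$ be a finite, connected, undirected graph with $n\ge2$ vertices and let $0<r<1$. Then the absorption time $\tau$ of the Moran process on $G$ with fitness $r$ (started from a single mutant at any vertex) satisfies $\mathbb{E}[\tau]\le\frac{1}{1-r}n^3$.
   Context: The Moran process on $G$ with mutant fitness $r>0$ is the Markov chain $(X_i)_{i\ge0}$ whose state $X_i\subseteq V$ is the set of vertices occupied by mutants; every other vertex is occupied by a non-mutant of fitness $1$. Write $W(S)=r|S|+|V\setminus S|$ for the total fitness. Given $X_i=S$, one step is: choose a vertex $x$ with probability $r/W(S)$ if $x\in S$ and $1/W(S)$ if $x\notin S$; then choose a neighbour $y$ of $x$ uniformly at random; set $X_{i+1}=S\cup\{y\}$ if $x\in S$ and $X_{i+1}=S\setminus\{y\}$ if $x\notin S$. The process starts from $X_0=\{x\}$ for a single vertex $x$. The absorption time is $\tau=\min\{i: X_i=\emptyset\text{ or }X_i=V\}$. *)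

theory Defs
  imports "HOL-Probability.Probability"
begin

definition connected_graph :: "'a set \<Rightarrow> ('a \<Rightarrow> 'a \<Rightarrow> bool) \<Rightarrow> bool" where
  "connected_graph V E \<longleftrightarrow> finite V \<and>
     (\<forall>u v. E u v \<longrightarrow> u \<in> V \<and> v \<in> V) \<and>
     (\<forall>u v. E u v \<longrightarrow> E v u) \<and>
     (\<forall>u. \<not> E u u) \<and>
     (\<forall>u\<in>V. \<forall>v\<in>V. E\<^sup>*\<^sup>* u v)"

definition moran_W :: "'a set \<Rightarrow> real \<Rightarrow> 'a set \<Rightarrow> real" where
  "moran_W V r S = r * real (card S) + real (card (V - S))"

definition moran_step :: "'a set \<Rightarrow> ('a \<Rightarrow> 'a \<Rightarrow> bool) \<Rightarrow> real \<Rightarrow> 'a set \<Rightarrow> 'a set pmf" where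
  "moran_step V E r S =
     bind_pmf
       (embed_pmf (\<lambda>x. if x \<in> V then (if x \<in> S then r else 1) / moran_W V r S else 0))
       (\<lambda>x. map_pmf (\<lambda>y. if x \<in> S then insert y S else S - {y}) (pmf_of_set {y. E x y}))"

definition moran_dist :: "'a set \<Rightarrow> ('a \<Rightarrow> 'a \<Rightarrow> bool) \<Rightarrow> real \<Rightarrow> 'a \<Rightarrow> nat \<Rightarrow> 'a set pmf" where
  "moran_dist V E r x0 i = ((\<lambda>p. bind_pmf p (moran_step V E r)) ^^ i) (return_pmf {x0})"

text \<open>Expected absorption time E[tau] = sum_{i>=0} P(tau > i). Since the states {} and V
  are absorbing, tau > i iff X_i is neither {} nor V.\<close>
definition moran_expected_absorption_time ::
  "'a set \<Rightarrow> ('a \<Rightarrow> 'a \<Rightarrow> bool) \<Rightarrow> real \<Rightarrow> 'a \<Rightarrow> ennreal" where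
  "moran_expected_absorption_time V E r x0 =
     (\<Sum>i. ennreal (measure_pmf.prob (moran_dist V E r x0 i) {S. S \<noteq> {} \<and> S \<noteq> V}))"

end

theory Submission
  imports Defs
begin

text \<open>Take the potential \<open>\<phi>(S) = (\<Sum>x\<in>S. 1 / deg x)\<close>. A step in which \<open>x\<close> reproduces
  onto its neighbour \<open>y\<close> across the boundary of the mutant set \<open>S\<close> changes \<open>\<phi>\<close> by
  \<open>\<plusminus>1 / deg y\<close>; this happens with probability \<open>r / (W(S) deg x)\<close> for a mutant \<open>x\<close> and
  \<open>1 / (W(S) deg x)\<close> for a non-mutant \<open>x\<close>. Pairing each boundary edge with its reverse, one
  step changes the expectation of \<open>\<phi>\<close> by \<open>-(1 - r) / W(S)\<close> times the sum of
  \<open>1 / (deg x deg y)\<close> over the boundary edges, which is at least \<open>1 / n\<^sup>2\<close> for a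
  connected graph, while \<open>W(S) \<le> n\<close>. So before absorption \<open>\<phi>\<close> drops by at least
  \<open>(1 - r) / n\<^sup>3\<close> per step in expectation, and as \<open>0 \<le> \<phi>\<close> and \<open>\<phi>({x\<^sub>0}) \<le> 1\<close> the expected
  number of steps before absorption is at most \<open>n\<^sup>3 / (1 - r)\<close>.\<close>

lemma expected_visits_le_potential:
  fixes K :: "'s \<Rightarrow> 's pmf" and \<Phi> :: "'s \<Rightarrow> ennreal"
  assumes start: "set_pmf p \<subseteq> A"
    and closed: "\<And>s. s \<in> A \<Longrightarrow> set_pmf (K s) \<subseteq> A"
    and drift: "\<And>s. s \<in> A \<Longrightarrow> (\<integral>\<^sup>+t. \<Phi> t \<partial>K s) + indicator B s \<le> \<Phi> s"
  shows "(\<Sum>i. ennreal (measure_pmf.prob (((\<lambda>q. bind_pmf q K) ^^ i) p) B)) \<le> (\<integral>\<^sup>+s. \<Phi> s \<partial>p)"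
proof -
  define X where "X i = ((\<lambda>q. bind_pmf q K) ^^ i) p" for i
  define a where "a i = (\<integral>\<^sup>+s. \<Phi> s \<partial>X i)" for i
  define v where "v i = ennreal (measure_pmf.prob (X i) B)" for i
  have X_Suc: "X (Suc i) = bind_pmf (X i) K" for i
    by (simp add: X_def)
  have X_A: "set_pmf (X i) \<subseteq> A" for i
    by (induction i) (use start closed in \<open>auto simp: X_def\<close>)
  have step: "a (Suc i) + v i \<le> a i" for i
  proof -
    have "a (Suc i) + v i = (\<integral>\<^sup>+s. (\<integral>\<^sup>+t. \<Phi> t \<partial>K s) + indicator B s \<partial>X i)"
      by (simp add: a_def v_def X_Suc nn_integral_add measure_pmf.emeasure_eq_measure)
    also have "\<dots> \<le> a i"
      unfolding a_def using X_A drift by (intro nn_integral_mono_AE AE_pmfI) blast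
    finally show ?thesis .
  qed
  have telescope: "a n + (\<Sum>i<n. v i) \<le> a 0" for n
  proof (induction n)
    case (Suc n)
    have "a (Suc n) + (\<Sum>i<Suc n. v i) = (a (Suc n) + v n) + (\<Sum>i<n. v i)"
      by (simp add: ac_simps)
    also have "\<dots> \<le> a n + (\<Sum>i<n. v i)"
      using step by (rule add_right_mono)
    finally show ?case using Suc.IH by order
  qed simp
  have "(\<Sum>i. v i) \<le> a 0"
  proof (rule suminf_le_const[OF summableI])
    show "(\<Sum>i<n. v i) \<le> a 0" for n
      using telescope[of n] by (rule order_trans[rotated]) simp
  qed
  then show ?thesis by (simp add: v_def a_def X_def)
qed

lemma rtranclp_crosses_boundary:
  assumes "R\<^sup>*\<^sup>* u v" "u \<in> S" "v \<notin> S"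
  shows "\<exists>x y. R x y \<and> x \<in> S \<and> y \<notin> S"
  using assms by (induction rule: rtranclp_induct) blast+

locale moran_graph =
  fixes V :: "'a set" and E :: "'a \<Rightarrow> 'a \<Rightarrow> bool" and r :: real
  assumes graph: "connected_graph V E"
    and two_vertices: "card V \<ge> 2"
    and fitness_pos: "0 < r"
begin

definition nbrs :: "'a \<Rightarrow> 'a set" where
  "nbrs x = {y. E x y}"

definition deg :: "'a \<Rightarrow> real" where
  "deg x = real (card (nbrs x))"

definition potential :: "'a set \<Rightarrow> real" where
  "potential S = (\<Sum>x\<in>S. 1 / deg x)"

definition cut :: "'a set \<Rightarrow> real" where
  "cut S = (\<Sum>x\<in>V. \<Sum>y\<in>V. if E x y \<and> x \<in> S \<and> y \<notin> S then 1 / (deg x * deg y) else 0)"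

definition choice_weight :: "'a set \<Rightarrow> 'a \<Rightarrow> real" where
  "choice_weight S x = (if x \<in> V then (if x \<in> S then r else 1) / moran_W V r S else 0)"

definition replace :: "'a set \<Rightarrow> 'a \<Rightarrow> 'a \<Rightarrow> 'a set" where
  "replace S x y = (if x \<in> S then insert y S else S - {y})"

lemma moran_step_eq:
  "moran_step V E r S =
     bind_pmf (embed_pmf (choice_weight S)) (\<lambda>x. map_pmf (replace S x) (pmf_of_set (nbrs x)))"
  unfolding moran_step_def choice_weight_def replace_def nbrs_def ..

lemma finite_V: "finite V"
  using graph by (simp add: connected_graph_def)

lemma edge_in_V: "E x y \<Longrightarrow> x \<in> V \<and> y \<in> V"
  using graph by (simp add: connected_graph_def)

lemma edge_sym: "E x y \<Longrightarrow> E y x"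
  using graph unfolding connected_graph_def by blast

lemma nbrs_subset: "nbrs x \<subseteq> V"
  using edge_in_V by (auto simp: nbrs_def)

lemma nbrs_eq: "nbrs x = {y \<in> V. E x y}"
  using edge_in_V by (auto simp: nbrs_def)

lemma finite_nbrs: "finite (nbrs x)"
  using nbrs_subset finite_V by (rule finite_subset)

lemma nbrs_nonempty:
  assumes "x \<in> V"
  shows "nbrs x \<noteq> {}"
proof -
  have "\<not> card V \<le> Suc 0"
    using two_vertices by simp
  then obtain a b where "a \<in> V" "b \<in> V" "a \<noteq> b"
    by (auto simp: card_le_Suc0_iff_eq[OF finite_V])
  then obtain v where v: "v \<in> V" "v \<noteq> x"
    by metis
  have "E\<^sup>*\<^sup>* x v"
    using graph assms v(1) by (simp add: connected_graph_def)
  then show ?thesis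
    using v(2) by (cases rule: converse_rtranclpE) (auto simp: nbrs_def)
qed

lemma deg_ge_1: "x \<in> V \<Longrightarrow> deg x \<ge> 1"
  using nbrs_nonempty finite_nbrs by (simp add: deg_def Suc_le_eq card_gt_0_iff)

lemma deg_le_card: "deg x \<le> real (card V)"
  using nbrs_subset finite_V by (simp add: deg_def card_mono)

lemma moran_W_pos:
  assumes "S \<subseteq> V"
  shows "moran_W V r S > 0"
proof (cases "S = {}")
  case True
  then show ?thesis
    using two_vertices by (simp add: moran_W_def)
next
  case False
  then have "card S > 0"
    using assms finite_V by (simp add: card_gt_0_iff finite_subset)
  then show ?thesis
    using fitness_pos by (simp add: moran_W_def add_pos_nonneg)
qed

lemma moran_W_le_card:
  assumes "r \<le> 1" "S \<subseteq> V"
  shows "moran_W V r S \<le> real (card V)"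
proof -
  have "r * real (card S) \<le> real (card S)"
    using assms(1) fitness_pos by (intro mult_left_le_one_le) auto
  moreover have "real (card V) = real (card S) + real (card (V - S))"
    using assms(2) finite_V by (simp add: card_Diff_subset finite_subset card_mono of_nat_diff)
  ultimately show ?thesis
    by (simp add: moran_W_def)
qed

lemma sum_choice_weight:
  assumes "S \<subseteq> V"
  shows "(\<Sum>x\<in>V. choice_weight S x) = 1"
proof -
  have "(\<Sum>x\<in>V. (if x \<in> S then r else 1)) = r * real (card S) + real (card (V - S))"
    using finite_V assms by (simp add: sum.If_cases Diff_eq Int_absorb1)
  then show ?thesis
    using moran_W_pos[OF assms] by (simp add: choice_weight_def moran_W_def flip: sum_divide_distrib)
qed

lemma pmf_choice:
  assumes "S \<subseteq> V"
  shows "pmf (embed_pmf (choice_weight S)) x = choice_weight S x"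
proof (rule pmf_embed_pmf)
  show nonneg: "0 \<le> choice_weight S x" for x
    using moran_W_pos[OF assms] fitness_pos by (simp add: choice_weight_def)
  have "(\<integral>\<^sup>+x. ennreal (choice_weight S x) \<partial>count_space UNIV) = (\<Sum>x\<in>V. ennreal (choice_weight S x))"
    using finite_V by (intro nn_integral_count_space') (auto simp: choice_weight_def)
  also have "\<dots> = 1"
    using nonneg sum_choice_weight[OF assms] by (simp add: sum_ennreal)
  finally show "(\<integral>\<^sup>+x. ennreal (choice_weight S x) \<partial>count_space UNIV) = 1" .
qed

lemma set_pmf_choice: "S \<subseteq> V \<Longrightarrow> set_pmf (embed_pmf (choice_weight S)) \<subseteq> V"
  by (auto simp: set_pmf_iff pmf_choice choice_weight_def split: if_splits)

lemma set_pmf_moran_step: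
  assumes "S \<subseteq> V"
  shows "set_pmf (moran_step V E r S) \<subseteq> Pow V"
proof -
  have "replace S x y \<subseteq> V" if "x \<in> V" "y \<in> nbrs x" for x y
    using that assms nbrs_subset by (auto simp: replace_def)
  then show ?thesis
    by (auto simp: moran_step_eq nbrs_nonempty finite_nbrs dest!: subsetD[OF set_pmf_choice[OF assms]]) blast
qed

lemma expectation_moran_step:
  assumes "S \<subseteq> V"
  shows "measure_pmf.expectation (moran_step V E r S) f =
           (\<Sum>x\<in>V. choice_weight S x / deg x * (\<Sum>y\<in>nbrs x. f (replace S x y)))"
  unfolding moran_step_eq
proof (subst pmf_expectation_bind[OF finite_V])
  show "set_pmf (embed_pmf (choice_weight S)) \<subseteq> V"
    using assms by (rule set_pmf_choice)
  show "\<And>x. x \<in> V \<Longrightarrow> finite (set_pmf (map_pmf (replace S x) (pmf_of_set (nbrs x))))"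
    using nbrs_nonempty finite_nbrs by simp
  show "(\<Sum>x\<in>V. pmf (embed_pmf (choice_weight S)) x *\<^sub>R
            measure_pmf.expectation (map_pmf (replace S x) (pmf_of_set (nbrs x))) f) =
        (\<Sum>x\<in>V. choice_weight S x / deg x * (\<Sum>y\<in>nbrs x. f (replace S x y)))"
    using nbrs_nonempty finite_nbrs
    by (intro sum.cong refl) (simp add: pmf_choice[OF assms] integral_pmf_of_set deg_def)
qed


lemma potential_replace:
  assumes "S \<subseteq> V" "E x y"
  shows "potential (replace S x y) = potential S +
           (if x \<in> S \<and> y \<notin> S then 1 / deg y else if x \<notin> S \<and> y \<in> S then - (1 / deg y) else 0)"
proof -
  have "finite S"
    using assms(1) finite_V by (rule finite_subset)
  then show ?thesis
    by (auto simp: potential_def replace_def insert_absorb sum_diff1)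
qed

lemma cut_reverse:
  "cut S = (\<Sum>x\<in>V. \<Sum>y\<in>V. if E x y \<and> x \<notin> S \<and> y \<in> S then 1 / (deg x * deg y) else 0)"
  unfolding cut_def by (subst sum.swap) (auto intro!: sum.cong dest: edge_sym simp: mult.commute)

lemma expected_potential_moran_step:
  assumes S: "S \<subseteq> V"
  shows "measure_pmf.expectation (moran_step V E r S) potential =
           potential S - (1 - r) / moran_W V r S * cut S"
proof -
  define increment where "increment x y =
    (if x \<in> S \<and> y \<notin> S then 1 / deg y else if x \<notin> S \<and> y \<in> S then - (1 / deg y) else 0)" for x y
  define out where "out x y = (if E x y \<and> x \<in> S \<and> y \<notin> S then 1 / (deg x * deg y) else 0)" for x y
  define into where "into x y = (if E x y \<and> x \<notin> S \<and> y \<in> S then 1 / (deg x * deg y) else 0)" for x y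
  have out_cut: "(\<Sum>x\<in>V. \<Sum>y\<in>V. out x y) = cut S"
    unfolding out_def cut_def ..
  have into_cut: "(\<Sum>x\<in>V. \<Sum>y\<in>V. into x y) = cut S"
    unfolding into_def cut_reverse ..
  \<comment> \<open>A boundary edge is crossed outwards by a mutant (weight \<open>r\<close>) and inwards by a
    non-mutant (weight \<open>1\<close>), with opposite effects on the potential.\<close>
  have vertex: "choice_weight S x / deg x * (\<Sum>y\<in>nbrs x. potential (replace S x y)) =
      choice_weight S x * potential S + (\<Sum>y\<in>V. (r * out x y - into x y) / moran_W V r S)"
    if x: "x \<in> V" for x
  proof -
    have "(\<Sum>y\<in>nbrs x. potential (replace S x y)) = (\<Sum>y\<in>nbrs x. potential S + increment x y)"
      using potential_replace[OF S] by (intro sum.cong) (auto simp: nbrs_def increment_def)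
    also have "\<dots> = deg x * potential S + (\<Sum>y\<in>V. if E x y then increment x y else 0)"
      using finite_V by (simp add: sum.distrib deg_def sum.inter_filter nbrs_eq)
    finally have "choice_weight S x / deg x * (\<Sum>y\<in>nbrs x. potential (replace S x y)) =
        choice_weight S x * potential S + (\<Sum>y\<in>V. if E x y then choice_weight S x / deg x * increment x y else 0)"
      using deg_ge_1[OF x] by (auto simp: field_simps sum_distrib_left intro!: sum.cong)
    also have "(\<Sum>y\<in>V. if E x y then choice_weight S x / deg x * increment x y else 0) =
        (\<Sum>y\<in>V. (r * out x y - into x y) / moran_W V r S)"
      using x by (intro sum.cong) (auto simp: choice_weight_def increment_def out_def into_def)
    finally show ?thesis .
  qed
  have "measure_pmf.expectation (moran_step V E r S) potential =
      (\<Sum>x\<in>V. choice_weight S x * potential S + (\<Sum>y\<in>V. (r * out x y - into x y) / moran_W V r S))"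
    unfolding expectation_moran_step[OF S] by (intro sum.cong refl vertex)
  also have "\<dots> = (\<Sum>x\<in>V. choice_weight S x) * potential S +
      (r * (\<Sum>x\<in>V. \<Sum>y\<in>V. out x y) - (\<Sum>x\<in>V. \<Sum>y\<in>V. into x y)) / moran_W V r S"
    by (simp add: sum.distrib sum_subtractf flip: sum_distrib_left sum_distrib_right sum_divide_distrib)
  also have "\<dots> = potential S - (1 - r) / moran_W V r S * cut S"
    using moran_W_pos[OF S] by (simp add: sum_choice_weight[OF S] out_cut into_cut field_simps)
  finally show ?thesis .
qed

lemma potential_nonneg: "potential S \<ge> 0"
  by (simp add: potential_def deg_def sum_nonneg)

lemma cut_nonneg: "cut S \<ge> 0"
  by (simp add: cut_def deg_def sum_nonneg)

lemma cut_lower_bound: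
  assumes S: "S \<subseteq> V" "S \<noteq> {}" "S \<noteq> V"
  shows "cut S \<ge> 1 / real (card V) ^ 2"
proof -
  obtain u v where "u \<in> S" "v \<in> V" "v \<notin> S"
    using S by blast
  moreover have "E\<^sup>*\<^sup>* u v"
    using graph S(1) calculation by (auto simp: connected_graph_def)
  ultimately obtain x y where xy: "E x y" "x \<in> S" "y \<notin> S"
    using rtranclp_crosses_boundary by metis
  have V: "x \<in> V" "y \<in> V"
    using edge_in_V[OF xy(1)] by auto
  let ?term = "\<lambda>x y. if E x y \<and> x \<in> S \<and> y \<notin> S then 1 / (deg x * deg y) else 0"
  have "deg x * deg y \<le> real (card V) ^ 2"
    unfolding power2_eq_square using deg_le_card by (intro mult_mono) (auto simp: deg_def)
  then have "1 / real (card V) ^ 2 \<le> 1 / (deg x * deg y)"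
    using deg_ge_1[OF V(1)] deg_ge_1[OF V(2)] by (intro frac_le mult_pos_pos) auto
  also have "\<dots> = ?term x y"
    using xy by simp
  also have "\<dots> \<le> (\<Sum>y'\<in>V. ?term x y')"
    using finite_V V by (intro member_le_sum) (auto simp: deg_def)
  also have "\<dots> \<le> cut S"
    unfolding cut_def using finite_V V by (intro member_le_sum sum_nonneg) (auto simp: deg_def)
  finally show ?thesis .
qed

lemma potential_drift:
  assumes "r < 1" "S \<subseteq> V"
  shows "measure_pmf.expectation (moran_step V E r S) potential
           + (1 - r) / real (card V) ^ 3 * indicator {S. S \<noteq> {} \<and> S \<noteq> V} S \<le> potential S"
proof (cases "S \<noteq> {} \<and> S \<noteq> V")
  case True
  have "(1 - r) / real (card V) \<le> (1 - r) / moran_W V r S"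
    using assms moran_W_pos moran_W_le_card by (simp add: frac_le)
  moreover have "1 / real (card V) ^ 2 \<le> cut S"
    using True assms(2) by (simp add: cut_lower_bound)
  ultimately have "(1 - r) / real (card V) * (1 / real (card V) ^ 2) \<le> (1 - r) / moran_W V r S * cut S"
    using assms moran_W_pos[OF assms(2)] by (intro mult_mono) auto
  then show ?thesis
    using True expected_potential_moran_step[OF assms(2)] by (simp add: power_eq_if)
next
  case False
  have "0 \<le> (1 - r) / moran_W V r S * cut S"
    using assms moran_W_pos[OF assms(2)] cut_nonneg by simp
  then show ?thesis
    using False expected_potential_moran_step[OF assms(2)] by simp
qed

lemma scaled_potential_drift:
  assumes "r < 1" "S \<subseteq> V"
  shows "(\<integral>\<^sup>+T. ennreal (real (card V) ^ 3 / (1 - r) * potential T) \<partial>moran_step V E r S)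
           + indicator {S. S \<noteq> {} \<and> S \<noteq> V} S
         \<le> ennreal (real (card V) ^ 3 / (1 - r) * potential S)"
proof -
  define c where "c = real (card V) ^ 3 / (1 - r)"
  have c_scale: "c * ((1 - r) / real (card V) ^ 3) = 1"
    using assms(1) two_vertices by (simp add: c_def)
  have "c \<ge> 0"
    using assms(1) by (simp add: c_def)
  then have real_drift:
    "c * measure_pmf.expectation (moran_step V E r S) potential + indicator {S. S \<noteq> {} \<and> S \<noteq> V} S
       \<le> c * potential S"
    using mult_left_mono[OF potential_drift[OF assms] \<open>c \<ge> 0\<close>]
    by (simp only: distrib_left mult.assoc[symmetric] c_scale mult_1)
  have "integrable (moran_step V E r S) potential"
    using finite_V set_pmf_moran_step[OF assms(2)]
    by (intro integrable_measure_pmf_finite) (auto intro: finite_subset)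
  then have "(\<integral>\<^sup>+T. ennreal (c * potential T) \<partial>moran_step V E r S) + indicator {S. S \<noteq> {} \<and> S \<noteq> V} S
      = ennreal (c * measure_pmf.expectation (moran_step V E r S) potential)
          + ennreal (indicator {S. S \<noteq> {} \<and> S \<noteq> V} S)"
    using \<open>c \<ge> 0\<close> by (simp add: nn_integral_eq_integral potential_nonneg ennreal_indicator)
  also have "\<dots> \<le> ennreal (c * potential S)"
    using real_drift \<open>c \<ge> 0\<close>
    by (simp add: integral_nonneg_AE potential_nonneg flip: ennreal_plus)
  finally show ?thesis
    by (simp add: c_def)
qed

end

theorem theorem5:
  fixes V :: "'a set" and E :: "'a \<Rightarrow> 'a \<Rightarrow> bool" and r :: real and x0 :: 'a
  assumes "connected_graph V E"
    and "card V \<ge> 2"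
    and "0 < r" and "r < 1"
    and "x0 \<in> V"
  shows "moran_expected_absorption_time V E r x0
           \<le> ennreal (real (card V) ^ 3 / (1 - r))"
proof -
  interpret moran_graph V E r
    using assms by unfold_locales
  let ?c = "real (card V) ^ 3 / (1 - r)"
  have "moran_expected_absorption_time V E r x0
      \<le> (\<integral>\<^sup>+S. ennreal (?c * potential S) \<partial>return_pmf {x0})"
    unfolding moran_expected_absorption_time_def moran_dist_def
    using assms(5) set_pmf_moran_step scaled_potential_drift[OF assms(4)]
    by (intro expected_visits_le_potential[where A = "Pow V"]) auto
  also have "\<dots> = ennreal (?c / deg x0)"
    by (simp add: potential_def mult.commute)
  also have "\<dots> \<le> ennreal ?c"
    using deg_ge_1[OF assms(5)] assms(4) divide_left_mono[of 1 "deg x0" ?c]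
    by (intro ennreal_leI) simp
  finally show ?thesis .
qed

end
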